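(* For every level $t \in \mathcal{L}$ there exist finitely many levels $u_1, \ldots, u_n$, each generated by the grammar $u ::= s^k(x) \mid s^k(0) \mid \operatorname{imax}(u, x)$ (with $k \in \mathbb{N}$ and $x \in \mathcal{X}$), such that $t =_{\mathcal{L}} \max(u_1, \ldots, u_n)$.
   Context: $\operatorname{imax}\colon \mathbb{N}\times\mathbb{N}\to\mathbb{N}$ is defined by $\operatorname{imax}(i,0)=0$ and $\operatorname{imax}(i,j+1)=\max(i,j+1)$. Levels are the terms of the grammar $t ::= x \mid 0 \mid s(t) \mid \max(t,t) \mid \operatorname{imax}(t,t)$, where $x$ ranges over a countable set of variables $\mathcal{X}$; $\mathcal{L}$ denotes the set of levels; $s^k$ denotes $k$ applications of $s$. A valuation is a function $\sigma\colon\mathcal{X}\to\mathbb{N}$; the value $[t]_\sigma$ is defined by $[0]_\sigma=0$, $[x]_\sigma=\sigma(x)$, $[s(t)]_\sigma=[t]_\sigma+1$, $[\max(t_1,t_2)]_\sigma=\max([t_1]_\sigma,[t_2]_\sigma)$, $[\operatorname{imax}(t_1,t_2)]_\sigma=\operatorname{imax}([t_1]_\sigma,[t_2]_\sigma)$. $t_1 =_{\mathcal{L}} t_2$ means $[t_1]_\sigma=[t_2]_\sigma$ for every valuation $\sigma$. *)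

theory Defs
  imports Main
begin

definition imax :: "nat \<Rightarrow> nat \<Rightarrow> nat" where
  "imax i j = (if j = 0 then 0 else max i j)"

datatype level = Var nat | Zero | Succ level | Max level level | IMax level level

fun eval :: "(nat \<Rightarrow> nat) \<Rightarrow> level \<Rightarrow> nat" where
  "eval \<sigma> Zero = 0"
| "eval \<sigma> (Var x) = \<sigma> x"
| "eval \<sigma> (Succ t) = Suc (eval \<sigma> t)"
| "eval \<sigma> (Max t1 t2) = max (eval \<sigma> t1) (eval \<sigma> t2)"
| "eval \<sigma> (IMax t1 t2) = imax (eval \<sigma> t1) (eval \<sigma> t2)"

definition level_eq :: "level \<Rightarrow> level \<Rightarrow> bool" where
  "level_eq t1 t2 \<longleftrightarrow> (\<forall>\<sigma>. eval \<sigma> t1 = eval \<sigma> t2)"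

definition succs :: "nat \<Rightarrow> level \<Rightarrow> level" where
  "succs k t = (Succ ^^ k) t"

inductive normal_u :: "level \<Rightarrow> bool" where
  nu_var: "normal_u (succs k (Var x))"
| nu_zero: "normal_u (succs k Zero)"
| nu_imax: "normal_u u \<Longrightarrow> normal_u (IMax u (Var x))"

fun max_list :: "level list \<Rightarrow> level" where
  "max_list [] = Zero"
| "max_list [u] = u"
| "max_list (u # v # us) = Max u (max_list (v # us))"

end

theory Submission
  imports Defs
begin

text \<open>
  Normalise bottom-up, representing a maximum of normal levels by the list of its arguments.
  Both \<open>s\<close> and \<open>imax\<close> (in each argument) distribute over \<open>max\<close>, so it suffices to apply them
  to single normal levels, where the identities
  \<open>s(imax(u, x)) = max(s(0), s(x), imax(s(u), x))\<close>,
  \<open>imax(u, 0) = 0\<close>, \<open>imax(u, s(w)) = max(u, s(w))\<close> and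
  \<open>imax(u, imax(w, x)) = max(imax(u, x), imax(w, x))\<close>
  bring the result back into normal form.
\<close>

lemma eval_max_list_Cons [simp]:
  "eval \<sigma> (max_list (u # us)) = max (eval \<sigma> u) (eval \<sigma> (max_list us))"
  by (cases us) simp_all

lemma eval_max_list_append [simp]:
  "eval \<sigma> (max_list (xs @ ys)) = max (eval \<sigma> (max_list xs)) (eval \<sigma> (max_list ys))"
  by (induction xs) (simp_all add: max.assoc)

lemma eval_max_list_concat_map:
  assumes "us \<noteq> []"
    and "\<And>u. u \<in> set us \<Longrightarrow> eval \<sigma> (max_list (f u)) = h (eval \<sigma> u)"
    and "\<And>a b. h (max a b) = max (h a) (h b)"
  shows "eval \<sigma> (max_list (concat (map f us))) = h (eval \<sigma> (max_list us))"
  using assms by (induction us) (fastforce simp: max_list.elims)+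

lemma imax_max_distrib_left: "imax (max a b) c = max (imax a c) (imax b c)"
  by (simp add: imax_def max_def)

lemma imax_max_distrib_right: "imax a (max b c) = max (imax a b) (imax a c)"
  by (simp add: imax_def max_def)

lemma succs_Suc: "succs (Suc k) t = Succ (succs k t)"
  by (simp add: succs_def)

lemma succs_0: "succs 0 t = t"
  by (simp add: succs_def)

lemma normal_u_Var: "normal_u (Var x)"
  using nu_var[of 0 x] by (simp add: succs_0)

lemma normal_u_Zero: "normal_u Zero"
  using nu_zero[of 0] by (simp add: succs_0)

fun succ_nf :: "level \<Rightarrow> level list" where
  "succ_nf (IMax u (Var x)) = Succ Zero # Succ (Var x) # map (\<lambda>v. IMax v (Var x)) (succ_nf u)"
| "succ_nf u = [Succ u]"

fun imax_nf :: "level \<Rightarrow> level \<Rightarrow> level list" where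
  "imax_nf u Zero = [Zero]"
| "imax_nf u (Succ w) = [u, Succ w]"
| "imax_nf u (IMax w (Var x)) = [IMax u (Var x), IMax w (Var x)]"
| "imax_nf u v = [IMax u v]"

fun nf :: "level \<Rightarrow> level list" where
  "nf (Var x) = [Var x]"
| "nf Zero = [Zero]"
| "nf (Succ t) = concat (map succ_nf (nf t))"
| "nf (Max a b) = nf a @ nf b"
| "nf (IMax a b) = concat (map (\<lambda>u. concat (map (imax_nf u) (nf b))) (nf a))"

lemma succ_nf_ne: "succ_nf u \<noteq> []"
  by (cases u rule: succ_nf.cases) simp_all

lemma imax_nf_ne: "imax_nf u v \<noteq> []"
  by (cases "(u, v)" rule: imax_nf.cases) simp_all

lemma nf_ne: "nf t \<noteq> []"
  by (induction t) (auto simp: succ_nf_ne imax_nf_ne neq_Nil_conv)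

lemma eval_max_list_map_IMax:
  "us \<noteq> [] \<Longrightarrow> eval \<sigma> (max_list (map (\<lambda>v. IMax v (Var x)) us)) = imax (eval \<sigma> (max_list us)) (\<sigma> x)"
proof (induction us)
  case (Cons u us)
  then show ?case by (cases "us = []") (simp_all add: imax_max_distrib_left)
qed simp

lemma eval_succ_nf: "eval \<sigma> (max_list (succ_nf u)) = Suc (eval \<sigma> u)"
  by (induction u rule: succ_nf.induct) (auto simp: eval_max_list_map_IMax succ_nf_ne imax_def)

lemma eval_imax_nf: "eval \<sigma> (max_list (imax_nf u v)) = imax (eval \<sigma> u) (eval \<sigma> v)"
  by (cases "(u, v)" rule: imax_nf.cases) (auto simp: imax_def)

lemma eval_nf: "eval \<sigma> (max_list (nf t)) = eval \<sigma> t"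
proof (induction t)
  case (Succ t)
  then show ?case
    by (simp add: eval_max_list_concat_map[OF nf_ne] eval_succ_nf)
next
  case (IMax a b)
  have "eval \<sigma> (max_list (concat (map (imax_nf u) (nf b)))) = imax (eval \<sigma> u) (eval \<sigma> b)" for u
    using IMax.IH(2)
    by (simp add: eval_max_list_concat_map[OF nf_ne] eval_imax_nf imax_max_distrib_right)
  with IMax.IH(1) show ?case
    by (simp add: eval_max_list_concat_map[OF nf_ne] imax_max_distrib_left)
qed simp_all

lemma succ_nf_succs:
  "succ_nf (succs k (Var x)) = [succs (Suc k) (Var x)]"
  "succ_nf (succs k Zero) = [succs (Suc k) Zero]"
  by (cases k; simp add: succs_def)+

lemma imax_nf_succs_Suc: "imax_nf u (succs (Suc k) t) = [u, succs (Suc k) t]"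
  by (simp add: succs_Suc)

lemma normal_succ_nf: "normal_u u \<Longrightarrow> v \<in> set (succ_nf u) \<Longrightarrow> normal_u v"
proof (induction arbitrary: v rule: normal_u.induct)
  case (nu_imax u x)
  then show ?case
    using nu_var[of "Suc 0" x] nu_zero[of "Suc 0"]
    by (auto simp: succs_Suc succs_0 intro: normal_u.nu_imax)
qed (auto simp: succ_nf_succs intro: normal_u.intros)

lemma normal_imax_nf:
  assumes "normal_u u" "normal_u v" "w \<in> set (imax_nf u v)"
  shows "normal_u w"
  using assms(2,3)
proof cases
  case (nu_var k x)
  then show ?thesis using assms(1,3)
    by (cases k) (auto simp: succs_0 imax_nf_succs_Suc intro: normal_u.intros)
next
  case (nu_zero k)
  then show ?thesis using assms(1,3)
    by (cases k) (auto simp: succs_0 imax_nf_succs_Suc intro: normal_u.intros normal_u_Zero)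
next
  case (nu_imax u' x)
  then show ?thesis using assms(1,3) by (auto intro: normal_u.intros)
qed

lemma normal_nf: "u \<in> set (nf t) \<Longrightarrow> normal_u u"
proof (induction t arbitrary: u)
  case (Succ t)
  then show ?case by (auto intro: normal_succ_nf)
next
  case (IMax a b)
  then show ?case by (auto intro: normal_imax_nf)
qed (auto simp: normal_u_Var normal_u_Zero)

theorem theorem18:
  fixes t :: level
  shows "\<exists>us. us \<noteq> [] \<and> (\<forall>u\<in>set us. normal_u u) \<and> level_eq t (max_list us)"
  using nf_ne normal_nf eval_nf unfolding level_eq_def by metis

end
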